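(* For every $a\in(0,\pi/4)$ one has $\Omega(a)=\Xi(-\beta(a))$, where $\beta(a)\in(0,\pi/2)$ is defined by $\cos^4\beta(a)=4\sin^2a\cos^2a$. In particular $\lim_{a\to0+}\Omega(a)=\frac\pi2$ equals $\lim_{\beta\to\pi/2}\Xi(-\beta)$.
   Context: $\Omega(a)=\sin a\cos a\int_a^{\pi/2-a}\frac{d\nu}{\cos\nu\sqrt{\sin^2\nu\cos^2\nu-\sin^2a\cos^2a}}$ for $a\in(0,\pi/4)$. For $b\in(-\pi/2,0)$, $\Xi(b)=\cos^2b\int_b^{-b}\frac{d\varphi}{\cos\varphi\sqrt{\cos^4\varphi-\cos^4b}}$. ($\Omega(a)$ is the increment of $\lambda$ along half an oscillation of the unit-speed geodesic of $4\pi^2\sin^2\nu(d\nu^2+\cos^2\nu d\lambda^2)$ with minimum $\nu=a$; $\Xi(b)$ is the increment of $\theta$ along half an oscillation of the unit-speed geodesic of $4\pi^2\cos^2\varphi(d\varphi^2+\cos^2\varphi d\theta^2)$ with minimum $\varphi=b$.) *)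

theory Defs
  imports "HOL-Analysis.Analysis"
begin

(* Omega(a) = sin a cos a * int_a^{pi/2-a} dnu / (cos nu sqrt(sin^2 nu cos^2 nu - sin^2 a cos^2 a)),
   an improper (but absolutely convergent) integral, taken as the Henstock-Kurzweil integral
   over the closed interval; the endpoint values are irrelevant (measure zero). *)
definition Omega :: "real \<Rightarrow> real" where
  "Omega a = sin a * cos a *
     integral {a..pi/2 - a}
       (\<lambda>\<nu>. 1 / (cos \<nu> * sqrt ((sin \<nu>)\<^sup>2 * (cos \<nu>)\<^sup>2 - (sin a)\<^sup>2 * (cos a)\<^sup>2)))"

definition Xi :: "real \<Rightarrow> real" where
  "Xi b = (cos b)\<^sup>2 *
     integral {b..-b}
       (\<lambda>\<phi>. 1 / (cos \<phi> * sqrt ((cos \<phi>) ^ 4 - (cos b) ^ 4)))"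

(* beta(a) in (0, pi/2) with cos^4 beta = 4 sin^2 a cos^2 a, i.e. cos^2 beta = 2 sin a cos a *)
definition beta :: "real \<Rightarrow> real" where
  "beta a = arccos (sqrt (2 * sin a * cos a))"

end

theory Submission
  imports Defs "HOL-Real_Asymp.Real_Asymp"
begin

(*
  The substitution 2 nu = pi/2 + arctan (cot 2a * sin theta), i.e. sin theta = - tan 2a * cot 2nu,
  maps (-pi/2, pi/2) increasingly onto (a, pi/2 - a) and turns Omega a into the integral of
  sin nu(theta) over (-pi/2, pi/2).  This integrand is bounded by 1 and, as a -> 0+, tends to 1 for
  theta > 0 and to 0 for theta < 0, so Omega a -> pi/2 by dominated convergence.

  For the identity, average the Omega-integrand with its reflection under nu |-> pi/2 - nu and
  substitute phi = arctan ((sin nu - cos nu) / sqrt (sin 2nu)), which satisfies cos^2 phi = sin 2nu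
  and maps (a, pi/2 - a) increasingly onto (-beta a, beta a).  As
  cos^4 phi - cos^4 (beta a) = sin^2 2nu - sin^2 2a = 4 (sin^2 nu cos^2 nu - sin^2 a cos^2 a),
  the averaged integrand is exactly the pullback of the Xi-integrand.  Finally beta is a bijection
  from (0, pi/4) onto (0, pi/2) whose inverse tends to 0 at pi/2, which carries the limit over to Xi.
*)

lemma strict_mono_on_if_deriv_pos:
  fixes g g' :: "real \<Rightarrow> real"
  assumes g_cont: "continuous_on {p..q} g"
    and g_deriv: "\<And>x. x \<in> {p<..<q} \<Longrightarrow> (g has_real_derivative g' x) (at x)"
    and g'_pos: "\<And>x. x \<in> {p<..<q} \<Longrightarrow> 0 < g' x"
  shows "strict_mono_on {p..q} g"
proof (rule strict_mono_onI)
  fix x y assume xy: "x \<in> {p..q}" "y \<in> {p..q}" "x < y"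
  show "g x < g y"
  proof (rule DERIV_pos_imp_increasing_open[OF \<open>x < y\<close>])
    show "\<exists>l. (g has_real_derivative l) (at z) \<and> 0 < l" if "x < z" "z < y" for z
    proof (intro exI conjI)
      have "z \<in> {p<..<q}" using that xy by auto
      then show "(g has_real_derivative g' z) (at z)" and "0 < g' z"
        by (simp_all add: g_deriv g'_pos)
    qed
    show "continuous_on {x..y} g"
      using xy by (intro continuous_on_subset[OF g_cont]) auto
  qed
qed

lemma image_greaterThanLessThan_strict_mono_on:
  fixes g :: "real \<Rightarrow> real"
  assumes "p \<le> q" "continuous_on {p..q} g" "strict_mono_on {p..q} g"
  shows "g ` {p<..<q} = {g p<..<g q}"
proof
  show "g ` {p<..<q} \<subseteq> {g p<..<g q}"
    by (auto intro!: strict_mono_onD[OF assms(3)])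
  show "{g p<..<g q} \<subseteq> g ` {p<..<q}"
  proof
    fix y assume y: "y \<in> {g p<..<g q}"
    then obtain x where "p \<le> x" "x \<le> q" "g x = y"
      using IVT'[of g p y q] assms(1,2) by auto
    with y show "y \<in> g ` {p<..<q}"
      by (cases "x = p \<or> x = q") auto
  qed
qed

lemma integral_substitution_strict_mono:
  fixes f g g' :: "real \<Rightarrow> real"
  assumes "p \<le> q" and g_cont: "continuous_on {p..q} g"
    and g_deriv: "\<And>x. x \<in> {p<..<q} \<Longrightarrow> (g has_real_derivative g' x) (at x)"
    and g'_pos: "\<And>x. x \<in> {p<..<q} \<Longrightarrow> 0 < g' x"
    and integrable: "(\<lambda>x. g' x * f (g x)) absolutely_integrable_on {p<..<q}"
  shows "f absolutely_integrable_on {g p<..<g q}"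
    and "integral {g p<..<g q} f = integral {p<..<q} (\<lambda>x. g' x * f (g x))"
proof -
  have mono: "strict_mono_on {p..q} g"
    using g_cont g_deriv g'_pos by (rule strict_mono_on_if_deriv_pos)
  have inj: "inj_on g {p<..<q}"
    using strict_mono_on_imp_inj_on[OF mono] by (rule inj_on_subset) auto
  have abs_eq: "\<And>x. x \<in> {p<..<q} \<Longrightarrow> \<bar>g' x\<bar> * f (g x) = g' x * f (g x)"
    using g'_pos by force
  have "(\<lambda>x. \<bar>g' x\<bar> * f (g x)) absolutely_integrable_on {p<..<q}"
    by (rule absolutely_integrable_spike_eq[THEN iffD1, OF negligible_empty _ integrable])
      (simp add: abs_eq)
  moreover have "integral {p<..<q} (\<lambda>x. \<bar>g' x\<bar> * f (g x)) = integral {p<..<q} (\<lambda>x. g' x * f (g x))"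
    by (rule integral_cong) (rule abs_eq)
  moreover have "(\<lambda>x. \<bar>g' x\<bar> * f (g x)) absolutely_integrable_on {p<..<q} \<and>
      integral {p<..<q} (\<lambda>x. \<bar>g' x\<bar> * f (g x)) = integral {p<..<q} (\<lambda>x. g' x * f (g x))
      \<longleftrightarrow> f absolutely_integrable_on g ` {p<..<q} \<and>
      integral (g ` {p<..<q}) f = integral {p<..<q} (\<lambda>x. g' x * f (g x))"
    using g_deriv by (intro has_absolute_integral_change_of_variables_1' inj)
      (auto intro: has_field_derivative_at_within)
  ultimately have "f absolutely_integrable_on g ` {p<..<q} \<and>
             integral (g ` {p<..<q}) f = integral {p<..<q} (\<lambda>x. g' x * f (g x))"
    by blast
  then show "f absolutely_integrable_on {g p<..<g q}"
    and "integral {g p<..<g q} f = integral {p<..<q} (\<lambda>x. g' x * f (g x))"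
    unfolding image_greaterThanLessThan_strict_mono_on[OF assms(1) g_cont mono] by auto
qed

lemma integral_symmetrize_greaterThanLessThan:
  fixes f :: "real \<Rightarrow> real"
  assumes f: "f absolutely_integrable_on {p<..<q}"
  shows "(\<lambda>x. (f x + f (p + q - x)) / 2) absolutely_integrable_on {p<..<q}"
    and "integral {p<..<q} (\<lambda>x. (f x + f (p + q - x)) / 2) = integral {p<..<q} f"
proof -
  have img: "(\<lambda>x. p + q - x) ` {p<..<q} = {p<..<q}"
    by (auto simp: image_iff intro!: bexI[where x="p + q - x" for x])
  have "(\<lambda>x. \<bar>-1\<bar> * f (p + q - x)) absolutely_integrable_on {p<..<q} \<and>
      integral {p<..<q} (\<lambda>x. \<bar>-1\<bar> * f (p + q - x)) = integral {p<..<q} f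
      \<longleftrightarrow> f absolutely_integrable_on (\<lambda>x. p + q - x) ` {p<..<q} \<and>
      integral ((\<lambda>x. p + q - x) ` {p<..<q}) f = integral {p<..<q} f"
  proof (rule has_absolute_integral_change_of_variables_1')
    show "inj_on (\<lambda>x. p + q - x) {p<..<q}" by (simp add: inj_on_def)
    show "((\<lambda>x. p + q - x) has_field_derivative -1) (at x within {p<..<q})" for x
      by (rule derivative_eq_intros refl)+ simp
  qed auto
  then have reflected: "(\<lambda>x. f (p + q - x)) absolutely_integrable_on {p<..<q}"
    "integral {p<..<q} (\<lambda>x. f (p + q - x)) = integral {p<..<q} f"
    unfolding img using f by simp_all
  have average: "(\<lambda>x. (f x + f (p + q - x)) / 2) = (\<lambda>x. (1/2) *\<^sub>R (f x + f (p + q - x)))"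
    by auto
  show "(\<lambda>x. (f x + f (p + q - x)) / 2) absolutely_integrable_on {p<..<q}"
    unfolding average by (intro absolutely_integrable_scaleR_left set_integral_add f reflected(1))
  show "integral {p<..<q} (\<lambda>x. (f x + f (p + q - x)) / 2) = integral {p<..<q} f"
    using f reflected unfolding absolutely_integrable_on_def by (simp add: integral_add)
qed

lemma integral_dominated_convergence_at_right:
  fixes f :: "real \<Rightarrow> real \<Rightarrow> real"
  assumes f_int: "\<And>t. f t integrable_on S" and h_int: "h integrable_on S"
    and bound: "\<And>t x. x \<in> S \<Longrightarrow> \<bar>f t x\<bar> \<le> h x"
    and lim: "\<And>x. x \<in> S \<Longrightarrow> ((\<lambda>t. f t x) \<longlongrightarrow> l x) (at_right c)"
  shows "((\<lambda>t. integral S (f t)) \<longlongrightarrow> integral S l) (at_right c)"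
proof (rule tendsto_at_right_sequentially[of c "c + 1"])
  fix T :: "nat \<Rightarrow> real"
  assume T_gt: "\<And>n. c < T n" and T_lim: "T \<longlonglongrightarrow> c"
  have T: "filterlim T (at_right c) sequentially"
    using T_gt by (intro tendsto_imp_filterlim_at_right[OF T_lim] always_eventually) simp
  show "(\<lambda>n. integral S (f (T n))) \<longlonglongrightarrow> integral S l"
  proof (rule dominated_convergence(2)[where h=h])
    show "(\<lambda>n. f (T n) x) \<longlonglongrightarrow> l x" if "x \<in> S" for x
      using filterlim_compose[OF lim[OF that] T] .
  qed (use f_int h_int bound in simp_all)
qed simp

definition omega_integrand :: "real \<Rightarrow> real \<Rightarrow> real" where
  "omega_integrand a \<nu> = 1 / (cos \<nu> * sqrt ((sin \<nu>)\<^sup>2 * (cos \<nu>)\<^sup>2 - (sin a)\<^sup>2 * (cos a)\<^sup>2))"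

lemma Omega_eq_integral_omega_integrand:
  "Omega a = sin a * cos a * integral {a<..<pi/2 - a} (omega_integrand a)"
  unfolding Omega_def omega_integrand_def[abs_def] integral_open_interval_real ..

definition nu_of_theta :: "real \<Rightarrow> real \<Rightarrow> real" where
  "nu_of_theta a \<theta> = (pi/2 + arctan (cot (2*a) * sin \<theta>)) / 2"

lemma nu_of_theta_bounds: "0 < nu_of_theta a \<theta>" "nu_of_theta a \<theta> < pi/2"
  using arctan_lbound[of "cot (2*a) * sin \<theta>"] arctan_ubound[of "cot (2*a) * sin \<theta>"]
  by (simp_all add: nu_of_theta_def)

lemma continuous_on_nu_of_theta: "continuous_on S (nu_of_theta a)"
  unfolding nu_of_theta_def[abs_def] by (intro continuous_intros) auto

lemma nu_of_theta_has_real_derivative: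
  "(nu_of_theta a has_real_derivative
     cot (2*a) * cos \<theta> / (2 * (1 + (cot (2*a) * sin \<theta>)\<^sup>2))) (at \<theta>)"
proof -
  have "1 + (cot (2*a) * sin \<theta>)\<^sup>2 \<noteq> 0"
    by (metis add_pos_nonneg zero_less_one zero_le_power2 less_irrefl)
  then show ?thesis
    unfolding nu_of_theta_def[abs_def]
    by - (rule derivative_eq_intros refl | simp add: field_simps)+
qed

lemma nu_of_theta_endpoints:
  assumes "0 < a" "a < pi/4"
  shows "nu_of_theta a (-(pi/2)) = a" "nu_of_theta a (pi/2) = pi/2 - a"
proof -
  have "arctan (cot (2*a)) = pi/2 - 2*a"
    using assms by (simp add: arctan_tan flip: tan_cot')
  then show "nu_of_theta a (-(pi/2)) = a" "nu_of_theta a (pi/2) = pi/2 - a"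
    by (simp_all add: nu_of_theta_def arctan_minus)
qed

lemma sin_cos_sq_mult_one_plus_cot_sq:
  fixes x :: real
  assumes "sin (2*x) \<noteq> 0"
  shows "(sin x * cos x)\<^sup>2 * (1 + (cot (2*x))\<^sup>2) = 1/4"
proof -
  have "(sin x * cos x)\<^sup>2 = (sin (2*x))\<^sup>2 / 4"
    by (simp add: sin_double power_mult_distrib)
  also have "\<dots> * (1 + (cot (2*x))\<^sup>2) = ((sin (2*x))\<^sup>2 + (cos (2*x))\<^sup>2) / 4"
    using assms by (simp add: cot_def field_simps power2_eq_square)
  finally show ?thesis by simp
qed

lemma sin_mult_cos_nu_of_theta:
  "sin (nu_of_theta a \<theta>) * cos (nu_of_theta a \<theta>) = 1 / (2 * sqrt (1 + (cot (2*a) * sin \<theta>)\<^sup>2))"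
proof -
  have "2 * nu_of_theta a \<theta> = pi/2 + arctan (cot (2*a) * sin \<theta>)"
    by (simp add: nu_of_theta_def)
  then have "sin (2 * nu_of_theta a \<theta>) = cos (arctan (cot (2*a) * sin \<theta>))"
    by (simp add: sin_add)
  then show ?thesis by (simp add: sin_double cos_arctan)
qed

lemma nu_of_theta_jacobian:
  assumes a: "0 < a" "a < pi/4" and \<theta>: "-(pi/2) < \<theta>" "\<theta> < pi/2"
  shows "cot (2*a) * cos \<theta> / (2 * (1 + (cot (2*a) * sin \<theta>)\<^sup>2)) * omega_integrand a (nu_of_theta a \<theta>)
         = sin (nu_of_theta a \<theta>) / (sin a * cos a)"
proof -
  define s where "s = sin a * cos a"
  define A where "A = cot (2*a)"
  define w where "w = A * sin \<theta>"
  define r where "r = sqrt (1 + w\<^sup>2)"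
  define \<nu> where "\<nu> = nu_of_theta a \<theta>"
  have s_pos: "0 < s" unfolding s_def using a by (intro mult_pos_pos sin_gt_zero cos_gt_zero) auto
  have A_pos: "0 < A" unfolding A_def using a by (intro cot_gt_zero) auto
  have "sin (2*a) \<noteq> 0" using a by (intro sin_gt_zero[THEN less_imp_neq, symmetric]) auto
  then have s_A: "s\<^sup>2 * (1 + A\<^sup>2) = 1/4"
    unfolding s_def A_def by (rule sin_cos_sq_mult_one_plus_cot_sq)
  have cos_\<theta>: "0 < cos \<theta>" using \<theta> by (intro cos_gt_zero_pi) auto
  have r: "0 < r" "r\<^sup>2 = 1 + w\<^sup>2" unfolding r_def by (simp_all add: add_pos_nonneg)
  have sc_\<nu>: "sin \<nu> * cos \<nu> = 1 / (2 * r)"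
    unfolding \<nu>_def r_def w_def A_def by (rule sin_mult_cos_nu_of_theta)
  have cos_\<nu>: "0 < cos \<nu>"
    using nu_of_theta_bounds[of a \<theta>] unfolding \<nu>_def by (intro cos_gt_zero) auto
  have "(sin \<nu>)\<^sup>2 * (cos \<nu>)\<^sup>2 - (sin a)\<^sup>2 * (cos a)\<^sup>2 = (sin \<nu> * cos \<nu>)\<^sup>2 - s\<^sup>2"
    by (simp add: s_def power_mult_distrib)
  also have "\<dots> = (s * A * cos \<theta> / r)\<^sup>2"
  proof -
    have "(s * A * cos \<theta>)\<^sup>2 = s\<^sup>2 * (1 + A\<^sup>2) - s\<^sup>2 * (1 + w\<^sup>2)"
      by (simp add: w_def power_mult_distrib cos_squared_eq algebra_simps)
    also have "\<dots> = 1/4 - s\<^sup>2 * r\<^sup>2"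
      by (simp only: s_A r(2))
    finally have "(s * A * cos \<theta> / r)\<^sup>2 = (1/4 - s\<^sup>2 * r\<^sup>2) / r\<^sup>2"
      by (simp only: power_divide)
    also have "\<dots> = (1 / (2 * r))\<^sup>2 - s\<^sup>2"
      using r(1) by (simp add: field_simps power2_eq_square)
    finally show ?thesis unfolding sc_\<nu> ..
  qed
  finally have "sqrt ((sin \<nu>)\<^sup>2 * (cos \<nu>)\<^sup>2 - (sin a)\<^sup>2 * (cos a)\<^sup>2) = s * A * cos \<theta> / r"
    using s_pos A_pos cos_\<theta> r by simp
  then have "omega_integrand a \<nu> = r / (cos \<nu> * s * A * cos \<theta>)"
    by (simp add: omega_integrand_def)
  then have "A * cos \<theta> / (2 * (1 + w\<^sup>2)) * omega_integrand a \<nu> = 1 / (2 * r * cos \<nu> * s)"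
    using s_pos A_pos cos_\<theta> cos_\<nu> r(1) unfolding r(2)[symmetric]
    by (simp add: field_simps power2_eq_square)
  also have "\<dots> = sin \<nu> / s"
    using sc_\<nu> cos_\<nu> s_pos r by (simp add: field_simps)
  finally show ?thesis unfolding s_def A_def w_def \<nu>_def .
qed

lemma omega_integrand_substitution:
  assumes a: "0 < a" "a < pi/4"
  shows "omega_integrand a absolutely_integrable_on {a<..<pi/2 - a}"
    and "integral {a<..<pi/2 - a} (omega_integrand a)
         = integral {-(pi/2)..pi/2} (\<lambda>\<theta>. sin (nu_of_theta a \<theta>)) / (sin a * cos a)"
proof -
  define d where "d \<theta> = cot (2*a) * cos \<theta> / (2 * (1 + (cot (2*a) * sin \<theta>)\<^sup>2))" for \<theta>
  have s_pos: "0 < sin a * cos a" using a by (intro mult_pos_pos sin_gt_zero cos_gt_zero) auto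
  have d_deriv: "(nu_of_theta a has_real_derivative d \<theta>) (at \<theta>)" for \<theta>
    unfolding d_def by (rule nu_of_theta_has_real_derivative)
  have d_pos: "0 < d \<theta>" if "\<theta> \<in> {-(pi/2)<..<pi/2}" for \<theta>
    using that a cot_gt_zero[of "2*a"] cos_gt_zero_pi[of \<theta>]
    unfolding d_def by (intro divide_pos_pos mult_pos_pos) (auto intro: add_pos_nonneg)
  have jacobian: "d \<theta> * omega_integrand a (nu_of_theta a \<theta>) = sin (nu_of_theta a \<theta>) / (sin a * cos a)"
    if "\<theta> \<in> {-(pi/2)<..<pi/2}" for \<theta>
    using nu_of_theta_jacobian[OF a] that unfolding d_def by auto
  have "(\<lambda>\<theta>. sin (nu_of_theta a \<theta>) / (sin a * cos a)) integrable_on {-(pi/2)<..<pi/2}"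
    using s_pos by (intro integrable_on_open_interval_real[THEN iffD2] integrable_continuous_interval
        continuous_intros continuous_on_nu_of_theta) auto
  then have sin_integrable:
    "(\<lambda>\<theta>. sin (nu_of_theta a \<theta>) / (sin a * cos a)) absolutely_integrable_on {-(pi/2)<..<pi/2}"
  proof (rule nonnegative_absolutely_integrable_1)
    show "0 \<le> sin (nu_of_theta a \<theta>) / (sin a * cos a)" for \<theta>
      using s_pos nu_of_theta_bounds[of a \<theta>] by (simp add: sin_ge_zero)
  qed
  have jacobian_integrable:
    "(\<lambda>\<theta>. d \<theta> * omega_integrand a (nu_of_theta a \<theta>)) absolutely_integrable_on {-(pi/2)<..<pi/2}"
    by (rule absolutely_integrable_spike_eq[THEN iffD1, OF negligible_empty _ sin_integrable])
      (simp add: jacobian)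
  have "-(pi/2) \<le> pi/2" by simp
  note substitution = integral_substitution_strict_mono[of "-(pi/2)" "pi/2" "nu_of_theta a" d,
      OF \<open>-(pi/2) \<le> pi/2\<close> continuous_on_nu_of_theta d_deriv d_pos jacobian_integrable, unfolded nu_of_theta_endpoints[OF a]]
  show "omega_integrand a absolutely_integrable_on {a<..<pi/2 - a}"
    using substitution(1) by simp
  have "integral {a<..<pi/2 - a} (omega_integrand a)
        = integral {-(pi/2)<..<pi/2} (\<lambda>\<theta>. d \<theta> * omega_integrand a (nu_of_theta a \<theta>))"
    by (rule substitution(2))
  also have "\<dots> = integral {-(pi/2)<..<pi/2} (\<lambda>\<theta>. sin (nu_of_theta a \<theta>) / (sin a * cos a))"
    by (rule integral_cong) (rule jacobian)
  finally have "integral {a<..<pi/2 - a} (omega_integrand a)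
        = integral {-(pi/2)<..<pi/2} (\<lambda>\<theta>. sin (nu_of_theta a \<theta>) / (sin a * cos a))" .
  then show "integral {a<..<pi/2 - a} (omega_integrand a)
         = integral {-(pi/2)..pi/2} (\<lambda>\<theta>. sin (nu_of_theta a \<theta>)) / (sin a * cos a)"
    by (simp add: integral_open_interval_real)
qed

lemma Omega_eq_integral_sin_nu_of_theta:
  assumes "0 < a" "a < pi/4"
  shows "Omega a = integral {-(pi/2)..pi/2} (\<lambda>\<theta>. sin (nu_of_theta a \<theta>))"
proof -
  have "0 < sin a" "0 < cos a" using assms by (auto intro: sin_gt_zero cos_gt_zero)
  then show ?thesis
    by (simp add: Omega_eq_integral_omega_integrand omega_integrand_substitution(2)[OF assms])
qed

lemma cot_double_tendsto_at_top: "filterlim (\<lambda>a::real. cot (2*a)) at_top (at_right 0)"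
  unfolding cot_def by real_asymp

lemma sin_nu_of_theta_tendsto_one:
  assumes "0 < sin \<theta>"
  shows "((\<lambda>a. sin (nu_of_theta a \<theta>)) \<longlongrightarrow> 1) (at_right 0)"
proof -
  have "filterlim (\<lambda>a. sin \<theta> * cot (2*a)) at_top (at_right 0)"
    using assms cot_double_tendsto_at_top by (rule filterlim_tendsto_pos_mult_at_top[OF tendsto_const])
  then have "((\<lambda>a. arctan (cot (2*a) * sin \<theta>)) \<longlongrightarrow> pi/2) (at_right 0)"
    by (simp add: mult.commute filterlim_compose[OF tendsto_arctan_at_top])
  then have "((\<lambda>a. sin (nu_of_theta a \<theta>)) \<longlongrightarrow> sin ((pi/2 + pi/2) / 2)) (at_right 0)"
    unfolding nu_of_theta_def by (intro tendsto_intros) auto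
  then show ?thesis by simp
qed

lemma sin_nu_of_theta_tendsto_zero:
  assumes "sin \<theta> < 0"
  shows "((\<lambda>a. sin (nu_of_theta a \<theta>)) \<longlongrightarrow> 0) (at_right 0)"
proof -
  have "filterlim (\<lambda>a. sin \<theta> * cot (2*a)) at_bot (at_right 0)"
    using assms cot_double_tendsto_at_top by (rule filterlim_tendsto_neg_mult_at_bot[OF tendsto_const])
  then have "((\<lambda>a. arctan (cot (2*a) * sin \<theta>)) \<longlongrightarrow> -(pi/2)) (at_right 0)"
    by (simp add: mult.commute filterlim_compose[OF tendsto_arctan_at_bot])
  then have "((\<lambda>a. sin (nu_of_theta a \<theta>)) \<longlongrightarrow> sin ((pi/2 + -(pi/2)) / 2)) (at_right 0)"
    unfolding nu_of_theta_def by (intro tendsto_intros) auto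
  then show ?thesis by simp
qed

lemma Omega_tendsto: "(Omega \<longlongrightarrow> pi/2) (at_right 0)"
proof -
  let ?f = "\<lambda>a \<theta>. sin (nu_of_theta a \<theta>)"
  have integrable: "?f a integrable_on {p..q}" for a p q
    by (intro integrable_continuous_interval continuous_intros continuous_on_nu_of_theta)
  have left: "((\<lambda>a. integral {-(pi/2)<..<0} (?f a)) \<longlongrightarrow> integral {-(pi/2)<..<0} (\<lambda>_. 0)) (at_right 0)"
  proof (rule integral_dominated_convergence_at_right[where h="\<lambda>_. 1"])
    show "((\<lambda>a. ?f a \<theta>) \<longlongrightarrow> 0) (at_right 0)" if "\<theta> \<in> {-(pi/2)<..<0}" for \<theta>
      using that sin_gt_zero[of "-\<theta>"] by (intro sin_nu_of_theta_tendsto_zero) auto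
  qed (auto simp: integrable_on_open_interval_real integrable)
  have right: "((\<lambda>a. integral {0<..<pi/2} (?f a)) \<longlongrightarrow> integral {0<..<pi/2} (\<lambda>_. 1)) (at_right 0)"
  proof (rule integral_dominated_convergence_at_right[where h="\<lambda>_. 1"])
    show "((\<lambda>a. ?f a \<theta>) \<longlongrightarrow> 1) (at_right 0)" if "\<theta> \<in> {0<..<pi/2}" for \<theta>
      using that by (intro sin_nu_of_theta_tendsto_one sin_gt_zero) auto
  qed (auto simp: integrable_on_open_interval_real integrable)
  have "((\<lambda>a. integral {-(pi/2)<..<0} (?f a) + integral {0<..<pi/2} (?f a))
        \<longlongrightarrow> integral {-(pi/2)<..<0} (\<lambda>_. 0) + integral {0<..<pi/2} (\<lambda>_. 1)) (at_right 0)"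
    using left right by (rule tendsto_add)
  also have "integral {-(pi/2)<..<0} (\<lambda>_. 0) + integral {0<..<pi/2} (\<lambda>_. 1::real) = pi/2"
    by (simp flip: integral_open_interval_real)
  finally show ?thesis
  proof (rule tendsto_cong[THEN iffD1, rotated])
    show "\<forall>\<^sub>F a in at_right 0.
        integral {-(pi/2)<..<0} (?f a) + integral {0<..<pi/2} (?f a) = Omega a"
      using eventually_at_right_real[of 0 "pi/4"]
    proof (rule eventually_mono)
      fix a :: real assume "a \<in> {0<..<pi/4}"
      then show "integral {-(pi/2)<..<0} (?f a) + integral {0<..<pi/2} (?f a) = Omega a"
        using Henstock_Kurzweil_Integration.integral_combine[of "-(pi/2)" 0 "pi/2" "?f a"] integrable
        by (simp add: Omega_eq_integral_sin_nu_of_theta flip: integral_open_interval_real)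
    qed simp
  qed
qed

definition xi_integrand :: "real \<Rightarrow> real \<Rightarrow> real" where
  "xi_integrand c \<phi> = 1 / (cos \<phi> * sqrt ((cos \<phi>) ^ 4 - c))"

lemma Xi_eq_integral_xi_integrand: "Xi b = (cos b)\<^sup>2 * integral {b..-b} (xi_integrand ((cos b) ^ 4))"
  unfolding Xi_def xi_integrand_def[abs_def] ..

lemma sin_double_bounds:
  assumes "0 < a" "a < pi/4"
  shows "0 < sin (2*a)" "sin (2*a) < 1"
proof -
  show "0 < sin (2*a)" using assms by (intro sin_gt_zero) auto
  have "sin (2*a) < sin (pi/2)" using assms by (intro sin_monotone_2pi) auto
  then show "sin (2*a) < 1" by simp
qed

lemma beta_eq_arccos: "beta a = arccos (sqrt (sin (2*a)))"
  by (simp add: beta_def sin_double)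

lemma beta_bounds:
  assumes "0 < a" "a < pi/4"
  shows "0 < beta a" "beta a < pi/2" "cos (beta a) = sqrt (sin (2*a))"
proof -
  have sqrt_bounds: "0 < sqrt (sin (2*a))" "sqrt (sin (2*a)) < 1"
    using sin_double_bounds[OF assms] by auto
  then show "0 < beta a"
    using arccos_lt_bounded[of "sqrt (sin (2*a))"] unfolding beta_eq_arccos by linarith
  have "arccos (sqrt (sin (2*a))) < arccos 0"
    using sqrt_bounds by (intro arccos_less_arccos) auto
  then show "beta a < pi/2" by (simp add: beta_eq_arccos)
  show "cos (beta a) = sqrt (sin (2*a))"
    using sqrt_bounds unfolding beta_eq_arccos by (intro cos_arccos) linarith+
qed

definition phi_of_nu :: "real \<Rightarrow> real" where
  "phi_of_nu \<nu> = arctan ((sin \<nu> - cos \<nu>) / sqrt (sin (2*\<nu>)))"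

lemma one_plus_sq_phi_of_nu_arg:
  assumes "0 < \<nu>" "\<nu> < pi/2"
  shows "1 + ((sin \<nu> - cos \<nu>) / sqrt (sin (2*\<nu>)))\<^sup>2 = 1 / sin (2*\<nu>)"
proof -
  have pos: "0 < sin (2*\<nu>)" using assms by (intro sin_gt_zero) auto
  have "sin (2*\<nu>) + (sin \<nu> - cos \<nu>)\<^sup>2 = (sin \<nu>)\<^sup>2 + (cos \<nu>)\<^sup>2"
    unfolding sin_double by (simp add: power2_eq_square algebra_simps)
  then have "sin (2*\<nu>) + (sin \<nu> - cos \<nu>)\<^sup>2 = 1" by simp
  with pos show ?thesis by (simp add: power_divide field_simps)
qed

lemma cos_phi_of_nu:
  assumes "0 < \<nu>" "\<nu> < pi/2"
  shows "cos (phi_of_nu \<nu>) = sqrt (sin (2*\<nu>))"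
  using one_plus_sq_phi_of_nu_arg[OF assms]
  by (simp add: phi_of_nu_def cos_arctan real_sqrt_divide)

lemma phi_of_nu_has_real_derivative:
  assumes "0 < \<nu>" "\<nu> < pi/2"
  shows "(phi_of_nu has_real_derivative (sin \<nu> + cos \<nu>) / sqrt (sin (2*\<nu>))) (at \<nu>)"
proof -
  define r where "r = sqrt (sin (2*\<nu>))"
  define u where "u = (sin \<nu> - cos \<nu>) / r"
  have pos: "0 < sin (2*\<nu>)" using assms by (intro sin_gt_zero) auto
  then have r: "0 < r" "r\<^sup>2 = sin (2*\<nu>)" by (simp_all add: r_def)
  have "((\<lambda>x. sin (2*x)) has_real_derivative 2 * cos (2*\<nu>)) (at \<nu>)"
    by (auto intro!: derivative_eq_intros)
  from DERIV_chain2[where g="\<lambda>x. sin (2*x)", OF DERIV_real_sqrt[OF pos] this]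
  have "((\<lambda>x. sqrt (sin (2*x))) has_real_derivative cos (2*\<nu>) / r) (at \<nu>)"
    by (rule DERIV_cong) (simp add: r_def inverse_eq_divide)
  moreover have "((\<lambda>x. sin x - cos x) has_real_derivative cos \<nu> + sin \<nu>) (at \<nu>)"
    by (auto intro!: derivative_eq_intros)
  ultimately have "((\<lambda>x. (sin x - cos x) / sqrt (sin (2*x))) has_real_derivative
      ((cos \<nu> + sin \<nu>) * r - (sin \<nu> - cos \<nu>) * (cos (2*\<nu>) / r)) / (r * r)) (at \<nu>)"
    using r(1) unfolding r_def by (intro DERIV_divide) auto
  from DERIV_chain2[OF DERIV_arctan this]
  have "(phi_of_nu has_real_derivative inverse (1 + u\<^sup>2) *
      (((cos \<nu> + sin \<nu>) * r - (sin \<nu> - cos \<nu>) * (cos (2*\<nu>) / r)) / (r * r))) (at \<nu>)"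
    by (simp add: phi_of_nu_def[abs_def] u_def r_def)
  then show ?thesis
  proof (rule DERIV_cong)
    have one: "r\<^sup>2 + (sin \<nu> - cos \<nu>)\<^sup>2 = 1"
      using one_plus_sq_phi_of_nu_arg[OF assms] r pos by (simp add: r_def power_divide field_simps)
    have "inverse (1 + u\<^sup>2) = r\<^sup>2"
      using one_plus_sq_phi_of_nu_arg[OF assms] r by (simp add: u_def r_def)
    then have "inverse (1 + u\<^sup>2) *
        (((cos \<nu> + sin \<nu>) * r - (sin \<nu> - cos \<nu>) * (cos (2*\<nu>) / r)) / (r * r))
        = ((cos \<nu> + sin \<nu>) * r\<^sup>2 - (sin \<nu> - cos \<nu>) * cos (2*\<nu>)) / r"
      using r(1) by (simp add: field_simps power2_eq_square)
    also have "(sin \<nu> - cos \<nu>) * cos (2*\<nu>) = - (sin \<nu> + cos \<nu>) * (sin \<nu> - cos \<nu>)\<^sup>2"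
      unfolding cos_double power2_eq_square by algebra
    also have "(cos \<nu> + sin \<nu>) * r\<^sup>2 - - (sin \<nu> + cos \<nu>) * (sin \<nu> - cos \<nu>)\<^sup>2
        = (sin \<nu> + cos \<nu>) * (r\<^sup>2 + (sin \<nu> - cos \<nu>)\<^sup>2)"
      by (simp add: algebra_simps)
    also have "\<dots> = sin \<nu> + cos \<nu>"
      by (simp only: one mult_1_right)
    finally show "inverse (1 + u\<^sup>2) *
        (((cos \<nu> + sin \<nu>) * r - (sin \<nu> - cos \<nu>) * (cos (2*\<nu>) / r)) / (r * r))
        = (sin \<nu> + cos \<nu>) / sqrt (sin (2*\<nu>))"
      unfolding r_def .
  qed
qed

lemma phi_of_nu_endpoints:
  assumes a: "0 < a" "a < pi/4"
  shows "phi_of_nu a = - beta a" "phi_of_nu (pi/2 - a) = beta a"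
proof -
  have "sin a < sin (pi/2 - a)" using a by (intro sin_monotone_2pi) auto
  then have sin_less_cos: "sin a < cos a" by (simp add: sin_diff)
  have pos: "0 < sin (2*a)" by (rule sin_double_bounds[OF a])
  have reflect: "sin (2 * (pi/2 - a)) = sin (2*a)"
    by (simp add: right_diff_distrib)
  have "-(pi/2) < phi_of_nu a" "phi_of_nu a < 0"
    using arctan_lbound sin_less_cos pos by (auto simp: phi_of_nu_def divide_neg_pos)
  then have "- phi_of_nu a = arccos (cos (- phi_of_nu a))"
    by (intro arccos_cos[symmetric]) linarith+
  also have "\<dots> = beta a"
    using a by (simp add: cos_phi_of_nu beta_eq_arccos)
  finally show "phi_of_nu a = - beta a" by simp
  have "0 < phi_of_nu (pi/2 - a)" "phi_of_nu (pi/2 - a) < pi/2"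
    using arctan_ubound sin_less_cos pos reflect by (auto simp: phi_of_nu_def sin_diff cos_diff)
  then have "phi_of_nu (pi/2 - a) = arccos (cos (phi_of_nu (pi/2 - a)))"
    by (intro arccos_cos[symmetric]) linarith+
  also have "\<dots> = beta a"
    using a reflect by (simp add: cos_phi_of_nu beta_eq_arccos)
  finally show "phi_of_nu (pi/2 - a) = beta a" .
qed

lemma phi_of_nu_jacobian:
  assumes \<nu>: "0 < \<nu>" "\<nu> < pi/2"
  shows "(sin \<nu> + cos \<nu>) / sqrt (sin (2*\<nu>)) * (2 * xi_integrand ((sin (2*a))\<^sup>2) (phi_of_nu \<nu>))
         = (omega_integrand a \<nu> + omega_integrand a (pi/2 - \<nu>)) / 2"
proof -
  define S C where "S = sin \<nu>" and "C = cos \<nu>"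
  define Q where "Q = sqrt (S\<^sup>2 * C\<^sup>2 - (sin a)\<^sup>2 * (cos a)\<^sup>2)"
  define r where "r = sqrt (sin (2*\<nu>))"
  have S: "0 < S" and C: "0 < C" unfolding S_def C_def using \<nu> by (auto intro: sin_gt_zero cos_gt_zero)
  have r: "0 < r" "r\<^sup>2 = 2 * S * C"
    using S C by (simp_all add: r_def S_def C_def sin_double)
  have "(cos (phi_of_nu \<nu>)) ^ 4 = (r\<^sup>2)\<^sup>2"
    unfolding cos_phi_of_nu[OF \<nu>] r_def[symmetric] by simp
  then have "(cos (phi_of_nu \<nu>)) ^ 4 - (sin (2*a))\<^sup>2 = 4 * (S\<^sup>2 * C\<^sup>2 - (sin a)\<^sup>2 * (cos a)\<^sup>2)"
    using r(2) unfolding sin_double by (simp add: power2_eq_square algebra_simps)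
  then have "sqrt ((cos (phi_of_nu \<nu>)) ^ 4 - (sin (2*a))\<^sup>2) = 2 * Q"
    unfolding Q_def by (simp only: real_sqrt_mult real_sqrt_four)
  then have xi: "xi_integrand ((sin (2*a))\<^sup>2) (phi_of_nu \<nu>) = 1 / (r * (2 * Q))"
    by (simp add: xi_integrand_def cos_phi_of_nu[OF \<nu>] r_def)
  have omega: "omega_integrand a \<nu> = 1 / (C * Q)" "omega_integrand a (pi/2 - \<nu>) = 1 / (S * Q)"
    by (simp_all add: omega_integrand_def Q_def S_def C_def sin_diff cos_diff mult.commute)
  \<comment> \<open>where Q = 0 both sides vanish, because x / 0 = 0\<close>
  show ?thesis
    unfolding xi omega S_def[symmetric] C_def[symmetric] r_def[symmetric]
    using S C r by (cases "Q = 0") (simp_all add: field_simps power2_eq_square)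
qed

lemma Omega_eq_Xi_neg_beta:
  assumes a: "0 < a" "a < pi/4"
  shows "Omega a = Xi (- beta a)"
proof -
  define T where "T = {a<..<pi/2 - a}"
  define I where "I = integral T (omega_integrand a)"
  define c where "c = (sin (2*a))\<^sup>2"
  define d where "d \<nu> = (sin \<nu> + cos \<nu>) / sqrt (sin (2*\<nu>))" for \<nu>
  define H where "H \<nu> = (omega_integrand a \<nu> + omega_integrand a (pi/2 - \<nu>)) / 2" for \<nu>
  have in_T: "0 < \<nu> \<and> \<nu> < pi/2" if "\<nu> \<in> T" for \<nu> using a that by (auto simp: T_def)
  \<comment> \<open>phi_of_nu sends nu and pi/2 - nu to opposite points, so only the average H of the
    Omega-integrand and its reflection is a pullback of the Xi-integrand\<close>
  have "a + (pi/2 - a) - \<nu> = pi/2 - \<nu>" for \<nu> by simp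
  note symmetrized = integral_symmetrize_greaterThanLessThan[OF omega_integrand_substitution(1)[OF a],
      unfolded this, folded H_def T_def I_def]
  have "isCont phi_of_nu \<nu>" if "0 < \<nu>" "\<nu> < pi/2" for \<nu>
    using phi_of_nu_has_real_derivative[OF that] by (rule DERIV_isCont)
  then have cont: "continuous_on {a..pi/2 - a} phi_of_nu"
    using a by (intro continuous_at_imp_continuous_on) auto
  have deriv: "(phi_of_nu has_real_derivative d \<nu>) (at \<nu>)" if "\<nu> \<in> T" for \<nu>
    using phi_of_nu_has_real_derivative in_T[OF that] unfolding d_def by blast
  have d_pos: "0 < d \<nu>" if "\<nu> \<in> T" for \<nu>
    using in_T[OF that] sin_gt_zero[of "2*\<nu>"] unfolding d_def
    by (intro divide_pos_pos add_pos_pos sin_gt_zero cos_gt_zero) auto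
  have jacobian: "d \<nu> * (2 * xi_integrand c (phi_of_nu \<nu>)) = H \<nu>" if "\<nu> \<in> T" for \<nu>
    using phi_of_nu_jacobian in_T[OF that] unfolding d_def H_def c_def by blast
  then have integrable: "(\<lambda>\<nu>. d \<nu> * (2 * xi_integrand c (phi_of_nu \<nu>))) absolutely_integrable_on T"
    by (rule absolutely_integrable_spike_eq[THEN iffD1, OF negligible_empty _ symmetrized(1)]) simp
  have "a \<le> pi/2 - a" using a by simp
  from integral_substitution_strict_mono(2)[of a "pi/2 - a", folded T_def, OF this cont deriv d_pos integrable]
  have "integral {phi_of_nu a<..<phi_of_nu (pi/2 - a)} (\<lambda>\<phi>. 2 * xi_integrand c \<phi>)
      = integral T (\<lambda>\<nu>. d \<nu> * (2 * xi_integrand c (phi_of_nu \<nu>)))" .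
  also have "\<dots> = I"
    using jacobian symmetrized(2) by (simp cong: integral_cong)
  finally have "integral {- beta a..beta a} (xi_integrand c) = I / 2"
    by (simp add: phi_of_nu_endpoints[OF a] integral_open_interval_real)
  moreover have "(cos (- beta a))\<^sup>2 = 2 * (sin a * cos a)" "(cos (- beta a)) ^ 4 = c"
    using beta_bounds(3)[OF a] sin_double_bounds(1)[OF a]
    by (simp_all add: c_def sin_double power4_eq_xxxx power2_eq_square)
  ultimately show ?thesis
    by (simp add: Xi_eq_integral_xi_integrand Omega_eq_integral_omega_integrand I_def T_def)
qed

definition beta_inv :: "real \<Rightarrow> real" where
  "beta_inv b = arcsin ((cos b)\<^sup>2) / 2"

lemma cos_sq_bounds:
  assumes "0 < b" "b < pi/2"
  shows "0 < (cos b)\<^sup>2" "(cos b)\<^sup>2 < 1"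
proof -
  have "0 < cos b" using assms by (intro cos_gt_zero) auto
  moreover have "cos b < 1"
    using cos_monotone_0_pi[of 0 b] assms by simp
  ultimately show "0 < (cos b)\<^sup>2" "(cos b)\<^sup>2 < 1"
    by (simp_all add: power_less_one_iff)
qed

lemma beta_inv_bounds:
  assumes "0 < b" "b < pi/2"
  shows "0 < beta_inv b" "beta_inv b < pi/4"
  using arcsin_less_arcsin[of 0 "(cos b)\<^sup>2"] arcsin_less_arcsin[of "(cos b)\<^sup>2" 1]
    cos_sq_bounds[OF assms] by (simp_all add: beta_inv_def)

lemma beta_beta_inv:
  assumes "0 < b" "b < pi/2"
  shows "beta (beta_inv b) = b"
proof -
  have "sin (2 * beta_inv b) = sin (arcsin ((cos b)\<^sup>2))"
    by (simp add: beta_inv_def)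
  also have "\<dots> = (cos b)\<^sup>2"
    using cos_sq_bounds[OF assms] zero_le_power2[of "cos b"] by (intro sin_arcsin) linarith+
  finally have "sin (2 * beta_inv b) = (cos b)\<^sup>2" .
  moreover have "0 < cos b" using assms by (intro cos_gt_zero) auto
  ultimately show ?thesis
    using assms by (simp add: beta_eq_arccos arccos_cos)
qed

lemma beta_inv_tendsto: "filterlim beta_inv (at_right 0) (at_left (pi/2))"
proof (rule tendsto_imp_filterlim_at_right)
  have "(beta_inv \<longlongrightarrow> arcsin ((cos (pi/2))\<^sup>2) / 2) (at_left (pi/2))"
    unfolding beta_inv_def[abs_def]
    by (intro tendsto_intros isCont_tendsto_compose[OF isCont_arcsin]) auto
  then show "(beta_inv \<longlongrightarrow> 0) (at_left (pi/2))" by simp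
  have "\<forall>\<^sub>F b in at_left (pi/2). b \<in> {0<..<pi/2}"
    by (rule eventually_at_left_real) simp
  then show "\<forall>\<^sub>F b in at_left (pi/2). 0 < beta_inv b"
    by eventually_elim (simp add: beta_inv_bounds)
qed

lemma Xi_neg_tendsto: "((\<lambda>b. Xi (- b)) \<longlongrightarrow> pi/2) (at_left (pi/2))"
proof -
  have "((\<lambda>b. Omega (beta_inv b)) \<longlongrightarrow> pi/2) (at_left (pi/2))"
    using Omega_tendsto beta_inv_tendsto by (rule filterlim_compose)
  moreover have "\<forall>\<^sub>F b in at_left (pi/2). b \<in> {0<..<pi/2}"
    by (rule eventually_at_left_real) simp
  then have "\<forall>\<^sub>F b in at_left (pi/2). Omega (beta_inv b) = Xi (- b)"
  proof eventually_elim
    fix b :: real assume "b \<in> {0<..<pi/2}"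
    then have b: "0 < b" "b < pi/2" by auto
    show "Omega (beta_inv b) = Xi (- b)"
      using Omega_eq_Xi_neg_beta[OF beta_inv_bounds[OF b]] by (simp add: beta_beta_inv[OF b])
  qed
  ultimately show ?thesis
    by (rule tendsto_cong[THEN iffD1, rotated])
qed

theorem mainTheorem4:
  shows "(\<forall>a. 0 < a \<and> a < pi/4 \<longrightarrow>
            0 < beta a \<and> beta a < pi/2 \<and>
            (cos (beta a)) ^ 4 = 4 * (sin a)\<^sup>2 * (cos a)\<^sup>2 \<and>
            Omega a = Xi (- beta a))
         \<and> (Omega \<longlongrightarrow> pi/2) (at_right 0)
         \<and> ((\<lambda>b. Xi (- b)) \<longlongrightarrow> pi/2) (at_left (pi/2))"
proof (intro conjI allI impI Omega_tendsto Xi_neg_tendsto)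
  fix a :: real assume "0 < a \<and> a < pi/4"
  then have a: "0 < a" "a < pi/4" by auto
  show "0 < beta a" "beta a < pi/2" by (fact beta_bounds[OF a])+
  show "Omega a = Xi (- beta a)" by (rule Omega_eq_Xi_neg_beta[OF a])
  show "(cos (beta a)) ^ 4 = 4 * (sin a)\<^sup>2 * (cos a)\<^sup>2"
    using beta_bounds(3)[OF a] sin_double_bounds(1)[OF a]
    by (simp add: sin_double power4_eq_xxxx power2_eq_square)
qed

end
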